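(* Let $G$ be a graph with minimum degree $\delta(G)$, and let $m$ be a positive integer with $m > \frac{\chi_\rho(G)}{\delta(G)}$ (so in particular $\delta(G)\ge 1$). Then $\chi_\rho(FSSD_m(G)) = \chi_\rho(FSSD_{m+1}(G))$.
   Context: All graphs are finite and simple. For a positive integer $i$, an $i$-packing in a graph is a set of vertices any two distinct members of which are at distance greater than $i$. The packing chromatic number $\chi_\rho(H)$ of a graph $H$ is the smallest integer $k$ such that $V(H)$ can be partitioned into sets $V_1,\dots,V_k$ with each $V_i$ an $i$-packing. For a positive integer $m$, $FSSD_m(G)$ is obtained from $G$ by replacing each edge $uv$ of $G$ by a copy of $K_{2,m}$: the edge $uv$ is deleted and $m$ new vertices are added, each adjacent to exactly $u$ and $v$. *)

theory Defs
  imports Main "HOL-Library.Extended_Nat"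
begin

definition simple_graph :: "'a set \<Rightarrow> 'a set set \<Rightarrow> bool" where
  "simple_graph V E \<longleftrightarrow> finite V \<and>
     (\<forall>e\<in>E. \<exists>u v. e = {u, v} \<and> u \<noteq> v \<and> u \<in> V \<and> v \<in> V)"

definition degree :: "'a set set \<Rightarrow> 'a \<Rightarrow> nat" where
  "degree E v = card {e \<in> E. v \<in> e}"

definition min_degree :: "'a set \<Rightarrow> 'a set set \<Rightarrow> nat" where
  "min_degree V E = Min (degree E ` V)"

fun is_walk :: "'a set \<Rightarrow> 'a set set \<Rightarrow> 'a list \<Rightarrow> bool" where
  "is_walk V E [] = False"
| "is_walk V E [x] = (x \<in> V)"
| "is_walk V E (x # y # xs) = (x \<in> V \<and> {x, y} \<in> E \<and> is_walk V E (y # xs))"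

text \<open>Graph distance (infinite if no walk exists).\<close>

definition gdist :: "'a set \<Rightarrow> 'a set set \<Rightarrow> 'a \<Rightarrow> 'a \<Rightarrow> enat" where
  "gdist V E u v = (INF xs \<in> {xs. is_walk V E xs \<and> hd xs = u \<and> last xs = v}.
                      enat (length xs - 1))"

definition is_packing :: "'a set \<Rightarrow> 'a set set \<Rightarrow> nat \<Rightarrow> 'a set \<Rightarrow> bool" where
  "is_packing V E i S \<longleftrightarrow> S \<subseteq> V \<and>
     (\<forall>u\<in>S. \<forall>v\<in>S. u \<noteq> v \<longrightarrow> gdist V E u v > enat i)"

text \<open>A packing k-colouring: a partition of V into V_1,...,V_k (classes may be empty)
  with V_i an i-packing, encoded by the colour map f.\<close>

definition packing_colouring :: "'a set \<Rightarrow> 'a set set \<Rightarrow> nat \<Rightarrow> ('a \<Rightarrow> nat) \<Rightarrow> bool" where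
  "packing_colouring V E k f \<longleftrightarrow> (\<forall>v\<in>V. f v \<in> {1..k}) \<and>
     (\<forall>i\<in>{1..k}. is_packing V E i {v \<in> V. f v = i})"

definition packing_chromatic_number :: "'a set \<Rightarrow> 'a set set \<Rightarrow> nat" where
  "packing_chromatic_number V E = (LEAST k. \<exists>f. packing_colouring V E k f)"

text \<open>FSSD_m(G): each edge e = uv is replaced by m new vertices Sub e 0, ..., Sub e (m-1),
  each adjacent exactly to u and v.\<close>

datatype 'a fssd_vertex = Orig 'a | Sub "'a set" nat

definition fssd_V :: "nat \<Rightarrow> 'a set \<Rightarrow> 'a set set \<Rightarrow> 'a fssd_vertex set" where
  "fssd_V m V E = Orig ` V \<union> {Sub e i | e i. e \<in> E \<and> i < m}"

definition fssd_E :: "nat \<Rightarrow> 'a set \<Rightarrow> 'a set set \<Rightarrow> 'a fssd_vertex set set" where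
  "fssd_E m V E = {{Orig u, Sub e i} | u e i. e \<in> E \<and> u \<in> e \<and> i < m}"

end

theory Submission
  imports Defs
begin

(* In FSSD_a(G) a walk between original vertices alternates between original and subdivision
   vertices, so it projects to a walk in G of at most half its length. Colouring every
   subdivision vertex 1 and every original vertex v with c v + 1, for an optimal packing
   colouring c of G, therefore shows chi(FSSD_a(G)) <= chi(G) + 1.  If chi(G) < a * delta(G),
   no optimal colouring of FSSD_a(G) gives an original vertex v colour 1: the a * deg v
   neighbours of v would be pairwise at distance 2, hence need distinct colours >= 2.
   So we may recolour all subdivision vertices 1 and keep the colours of the original vertices;
   this colouring transfers to FSSD_b(G) for every b, since sending the subdivision vertex
   Sub e i to Sub e (i mod a) maps walks of FSSD_b(G) to walks of FSSD_a(G) of the same length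
   and the same original end vertices. Taking (a, b) = (m, m + 1) and (m + 1, m) gives the
   theorem. *)

lemma Orig_in_fssd_V [simp]: "Orig u \<in> fssd_V n V E \<longleftrightarrow> u \<in> V"
  unfolding fssd_V_def by auto

lemma Sub_in_fssd_V [simp]: "Sub e i \<in> fssd_V n V E \<longleftrightarrow> e \<in> E \<and> i < n"
  unfolding fssd_V_def by auto

lemma Orig_Sub_in_fssd_E [simp]:
  "{Orig u, Sub e i} \<in> fssd_E n V E \<longleftrightarrow> e \<in> E \<and> u \<in> e \<and> i < n"
  unfolding fssd_E_def by (auto simp: doubleton_eq_iff)

lemma Sub_Orig_in_fssd_E [simp]:
  "{Sub e i, Orig u} \<in> fssd_E n V E \<longleftrightarrow> e \<in> E \<and> u \<in> e \<and> i < n"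
  by (metis Orig_Sub_in_fssd_E insert_commute)

lemma Orig_Orig_notin_fssd_E [simp]: "{Orig u, Orig w} \<notin> fssd_E n V E"
  unfolding fssd_E_def by (auto simp: doubleton_eq_iff)

lemma Sub_Sub_notin_fssd_E [simp]: "{Sub e i, Sub e' j} \<notin> fssd_E n V E"
  unfolding fssd_E_def by (auto simp: doubleton_eq_iff)

lemma fssd_E_edgeE:
  assumes "{x, y} \<in> fssd_E n V E"
  obtains u e i where "e \<in> E" "u \<in> e" "i < n"
    "x = Orig u \<and> y = Sub e i \<or> x = Sub e i \<and> y = Orig u"
  using assms unfolding fssd_E_def by (auto simp: doubleton_eq_iff)

lemma is_walk_nonempty: "is_walk V E xs \<Longrightarrow> xs \<noteq> []"
  by (cases xs) auto

lemma is_walk_set_subset: "is_walk V E xs \<Longrightarrow> set xs \<subseteq> V"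
  by (induction V E xs rule: is_walk.induct) auto

lemma is_walk_hd_last_in:
  assumes "is_walk V E xs"
  shows "hd xs \<in> V" "last xs \<in> V"
  using is_walk_set_subset[OF assms] is_walk_nonempty[OF assms] by auto

lemma is_walk_map:
  assumes "\<And>x. x \<in> V \<Longrightarrow> h x \<in> V'" and "\<And>x y. {x, y} \<in> E \<Longrightarrow> {h x, h y} \<in> E'"
  shows "is_walk V E xs \<Longrightarrow> is_walk V' E' (map h xs)"
  by (induction xs rule: induct_list012) (auto simp: assms)

lemma is_walk_length_le_2:
  "is_walk V E xs \<Longrightarrow> hd xs \<noteq> last xs \<Longrightarrow> length xs \<le> 2 \<Longrightarrow> {hd xs, last xs} \<in> E"
  by (cases xs rule: remdups_adj.cases) auto

lemma enat_less_gdist_iff: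
  "enat i < gdist V E u v \<longleftrightarrow>
     (\<forall>xs. is_walk V E xs \<and> hd xs = u \<and> last xs = v \<longrightarrow> i < length xs - 1)"
proof
  assume i: "enat i < gdist V E u v"
  show "\<forall>xs. is_walk V E xs \<and> hd xs = u \<and> last xs = v \<longrightarrow> i < length xs - 1"
  proof (intro allI impI)
    fix xs assume "is_walk V E xs \<and> hd xs = u \<and> last xs = v"
    then have "gdist V E u v \<le> enat (length xs - 1)"
      unfolding gdist_def by (intro INF_lower) auto
    with i show "i < length xs - 1"
      using less_le_trans by fastforce
  qed
next
  assume "\<forall>xs. is_walk V E xs \<and> hd xs = u \<and> last xs = v \<longrightarrow> i < length xs - 1"
  then have "enat (Suc i) \<le> gdist V E u v"
    unfolding gdist_def by (intro INF_greatest) (auto simp: Suc_le_eq)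
  then show "enat i < gdist V E u v"
    using Suc_ile_eq by blast
qed

lemma packing_colouringI:
  assumes "\<And>v. v \<in> V \<Longrightarrow> f v \<in> {1..k}"
    and "\<And>xs. is_walk V E xs \<Longrightarrow> hd xs \<noteq> last xs \<Longrightarrow> f (hd xs) = f (last xs) \<Longrightarrow>
           f (hd xs) < length xs - 1"
  shows "packing_colouring V E k f"
  using assms unfolding packing_colouring_def is_packing_def enat_less_gdist_iff by fastforce

lemma packing_colouring_in_range:
  "packing_colouring V E k f \<Longrightarrow> v \<in> V \<Longrightarrow> f v \<in> {1..k}"
  unfolding packing_colouring_def by blast

lemma packing_colouring_walk:
  assumes f: "packing_colouring V E k f" and xs: "is_walk V E xs"
    and "hd xs \<noteq> last xs" and "f (hd xs) = f (last xs)"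
  shows "f (hd xs) < length xs - 1"
proof -
  note ends = is_walk_hd_last_in[OF xs]
  then have "is_packing V E (f (hd xs)) {v \<in> V. f v = f (hd xs)}"
    using f packing_colouring_in_range[OF f] unfolding packing_colouring_def by blast
  then show ?thesis
    using assms ends unfolding is_packing_def enat_less_gdist_iff by auto
qed

lemma packing_chromatic_number_le:
  "packing_colouring V E k f \<Longrightarrow> packing_chromatic_number V E \<le> k"
  unfolding packing_chromatic_number_def by (blast intro: Least_le)

lemma packing_chromatic_number_attained:
  assumes "packing_colouring V E k f"
  shows "\<exists>g. packing_colouring V E (packing_chromatic_number V E) g"
  unfolding packing_chromatic_number_def
  by (rule LeastI_ex[where P = "\<lambda>k. \<exists>g. packing_colouring V E k g"]) (use assms in blast)

lemma packing_colouring_injective: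
  assumes "finite V"
  shows "\<exists>f. packing_colouring V E (card V) f"
proof -
  obtain h where h: "bij_betw h V {0..<card V}"
    using ex_bij_betw_finite_nat[OF assms] by blast
  have "packing_colouring V E (card V) (\<lambda>v. h v + 1)"
  proof (rule packing_colouringI)
    show "h v + 1 \<in> {1..card V}" if "v \<in> V" for v
      using h bij_betw_apply that by fastforce
    show "h (hd xs) + 1 < length xs - 1"
      if "is_walk V E xs" "hd xs \<noteq> last xs" "h (hd xs) + 1 = h (last xs) + 1" for xs
      using that is_walk_hd_last_in[OF that(1)] h unfolding bij_betw_def inj_on_def by auto
  qed
  then show ?thesis by blast
qed

lemma fssd_walk_project:
  assumes G: "simple_graph V E"
  shows "is_walk (fssd_V n V E) (fssd_E n V E) xs \<Longrightarrow> hd xs = Orig u \<Longrightarrow> last xs = Orig v \<Longrightarrow>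
    \<exists>ys. is_walk V E ys \<and> hd ys = u \<and> last ys = v \<and> 2 * (length ys - 1) \<le> length xs - 1"
proof (induction xs arbitrary: u rule: induct_list012)
  case 1
  then show ?case by simp
next
  case (2 x)
  then show ?case by (intro exI[of _ "[u]"]) auto
next
  case (3 x y zs)
  then have x: "x = Orig u" by simp
  obtain e i where y: "y = Sub e i" and e: "e \<in> E" "u \<in> e"
    using "3.prems"(1) x by (auto elim!: fssd_E_edgeE)
  obtain z zs' where zs: "zs = z # zs'"
    using "3.prems" y by (cases zs) auto
  obtain w where z: "z = Orig w" and "w \<in> e"
    using "3.prems"(1) y zs by (auto elim!: fssd_E_edgeE)
  then obtain ys where ys: "is_walk V E ys" "hd ys = w" "last ys = v"
      "2 * (length ys - 1) \<le> length zs - 1"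
    using "3.IH"(1) "3.prems" y zs by auto
  show ?case
  proof (cases "u = w")
    case True
    then show ?thesis using ys zs by (intro exI[of _ ys]) auto
  next
    case False
    with G e \<open>w \<in> e\<close> have "e = {u, w}" "u \<in> V"
      unfolding simple_graph_def by auto
    moreover obtain t where "ys = w # t"
      using ys is_walk_nonempty by (cases ys) auto
    ultimately show ?thesis using ys e zs by (intro exI[of _ "u # ys"]) auto
  qed
qed

definition fssd_colouring :: "('a \<Rightarrow> nat) \<Rightarrow> 'a fssd_vertex \<Rightarrow> nat" where
  "fssd_colouring c x = (case x of Orig v \<Rightarrow> c v | Sub e i \<Rightarrow> 1)"

lemma fssd_colouring_simps [simp]:
  "fssd_colouring c (Orig v) = c v" "fssd_colouring c (Sub e i) = 1"
  unfolding fssd_colouring_def by simp_all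

lemma packing_colouring_fssd_colouring:
  assumes "1 \<le> k"
    and c: "\<And>v. v \<in> V \<Longrightarrow> c v \<in> {2..k}"
    and walk: "\<And>xs u v. is_walk (fssd_V n V E) (fssd_E n V E) xs \<Longrightarrow>
        hd xs = Orig u \<Longrightarrow> last xs = Orig v \<Longrightarrow> u \<noteq> v \<Longrightarrow> c u = c v \<Longrightarrow>
        c u < length xs - 1"
  shows "packing_colouring (fssd_V n V E) (fssd_E n V E) k (fssd_colouring c)"
proof (rule packing_colouringI)
  show "fssd_colouring c x \<in> {1..k}" if "x \<in> fssd_V n V E" for x
    using that assms(1) c by (cases x) force+
next
  fix xs assume xs: "is_walk (fssd_V n V E) (fssd_E n V E) xs" and ne: "hd xs \<noteq> last xs"
    and eq: "fssd_colouring c (hd xs) = fssd_colouring c (last xs)"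
  note ends = is_walk_hd_last_in[OF xs]
  show "fssd_colouring c (hd xs) < length xs - 1"
  proof (cases "hd xs"; cases "last xs")
    fix u v assume "hd xs = Orig u" "last xs = Orig v"
    then show ?thesis using walk[OF xs] eq ne by simp
  next
    fix u e i assume "hd xs = Orig u" "last xs = Sub e i"
    then show ?thesis using ends eq c by fastforce
  next
    fix e i v assume "hd xs = Sub e i" "last xs = Orig v"
    then show ?thesis using ends eq c by fastforce
  next
    fix e i e' j assume hd: "hd xs = Sub e i" and "last xs = Sub e' j"
    then have "\<not> length xs \<le> 2"
      using is_walk_length_le_2[OF xs ne] by auto
    then show ?thesis using hd by simp
  qed
qed

lemma fssd_packing_colouring_lift:
  assumes G: "simple_graph V E" and c: "packing_colouring V E k c"
  shows "packing_colouring (fssd_V n V E) (fssd_E n V E) (k + 1) (fssd_colouring (\<lambda>v. c v + 1))"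
proof (rule packing_colouring_fssd_colouring)
  show "c v + 1 \<in> {2..k + 1}" if "v \<in> V" for v
    using packing_colouring_in_range[OF c that] by simp
next
  fix xs u v assume xs: "is_walk (fssd_V n V E) (fssd_E n V E) xs"
    and "hd xs = Orig u" "last xs = Orig v" "u \<noteq> v" "c u + 1 = c v + 1"
  moreover obtain ys where ys: "is_walk V E ys" "hd ys = u" "last ys = v"
      "2 * (length ys - 1) \<le> length xs - 1"
    using fssd_walk_project[OF G xs] calculation by blast
  ultimately have "c u < length ys - 1"
    using packing_colouring_walk[OF c ys(1)] by simp
  moreover have "1 \<le> c u"
    using packing_colouring_in_range[OF c] is_walk_hd_last_in(1)[OF ys(1)] ys(2) by force
  ultimately show "c u + 1 < length xs - 1"
    using ys(4) by simp
qed simp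

lemma packing_chromatic_number_fssd_le_Suc:
  assumes G: "simple_graph V E"
  shows "packing_chromatic_number (fssd_V n V E) (fssd_E n V E) \<le> packing_chromatic_number V E + 1"
proof -
  have "finite V" using G unfolding simple_graph_def by blast
  then obtain c where "packing_colouring V E (packing_chromatic_number V E) c"
    using packing_colouring_injective packing_chromatic_number_attained by blast
  then show ?thesis
    by (rule packing_chromatic_number_le[OF fssd_packing_colouring_lift[OF G]])
qed

lemma fssd_colour_1_degree_bound:
  assumes f: "packing_colouring (fssd_V n V E) (fssd_E n V E) k f"
    and v: "v \<in> V" and f_v: "f (Orig v) = 1"
  shows "n * degree E v < k"
proof -
  let ?N = "(\<lambda>(e, i). Sub e i) ` ({e \<in> E. v \<in> e} \<times> {..<n})"
  have N: "a \<in> fssd_V n V E" "{Orig v, a} \<in> fssd_E n V E" "{a, Orig v} \<in> fssd_E n V E"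
    if "a \<in> ?N" for a
    using that by auto
  have card_N: "card ?N = n * degree E v"
    by (subst card_image) (auto simp: inj_on_def degree_def card_cartesian_product)
  have colours_N: "f ` ?N \<subseteq> {2..k}"
  proof
    fix c assume "c \<in> f ` ?N"
    then obtain a where a: "a \<in> ?N" "c = f a" by blast
    have "is_walk (fssd_V n V E) (fssd_E n V E) [Orig v, a]" using N[OF a(1)] v by simp
    then have "f a \<noteq> 1"
      using packing_colouring_walk[OF f, of "[Orig v, a]"] f_v a(1) by auto
    then show "c \<in> {2..k}"
      using packing_colouring_in_range[OF f N(1)[OF a(1)]] a(2) by auto
  qed
  have "inj_on f ?N"
  proof
    fix a b assume a: "a \<in> ?N" and b: "b \<in> ?N" and "f a = f b"
    have "is_walk (fssd_V n V E) (fssd_E n V E) [a, Orig v, b]"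
      using N[OF a] N[OF b] v by simp
    then have "a \<noteq> b \<Longrightarrow> f a < 2"
      using packing_colouring_walk[OF f, of "[a, Orig v, b]"] \<open>f a = f b\<close> by simp
    then show "a = b" using colours_N a by force
  qed
  then have "card ?N = card (f ` ?N)" by (simp add: card_image)
  also have "\<dots> \<le> card {2..k}" using colours_N by (intro card_mono) simp_all
  finally have "card ?N \<le> k - 1" by simp
  moreover have "1 \<le> k" using packing_colouring_in_range[OF f, of "Orig v"] v by simp
  ultimately show ?thesis using card_N by simp
qed

lemma fssd_colour_Orig_ne_1:
  assumes "finite V" and f: "packing_colouring (fssd_V n V E) (fssd_E n V E) k f"
    and k: "k \<le> n * min_degree V E" and v: "v \<in> V"
  shows "f (Orig v) \<noteq> 1"
proof
  assume "f (Orig v) = 1"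
  then have "n * degree E v < k" by (rule fssd_colour_1_degree_bound[OF f v])
  moreover have "min_degree V E \<le> degree E v"
    unfolding min_degree_def using assms(1) v by simp
  ultimately show False using k mult_le_mono2[of "min_degree V E" "degree E v" n] by linarith
qed

definition fssd_fold :: "nat \<Rightarrow> 'a fssd_vertex \<Rightarrow> 'a fssd_vertex" where
  "fssd_fold a x = (case x of Orig v \<Rightarrow> Orig v | Sub e i \<Rightarrow> Sub e (i mod a))"

lemma fssd_fold_Orig [simp]: "fssd_fold a (Orig v) = Orig v"
  unfolding fssd_fold_def by simp

lemma is_walk_fssd_fold:
  assumes "0 < a" and "is_walk (fssd_V b V E) (fssd_E b V E) xs"
  shows "is_walk (fssd_V a V E) (fssd_E a V E) (map (fssd_fold a) xs)"
proof (rule is_walk_map[OF _ _ assms(2)])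
  show "fssd_fold a x \<in> fssd_V a V E" if "x \<in> fssd_V b V E" for x
    using that assms(1) unfolding fssd_fold_def by (cases x) auto
  show "{fssd_fold a x, fssd_fold a y} \<in> fssd_E a V E" if "{x, y} \<in> fssd_E b V E" for x y
    using that by (rule fssd_E_edgeE) (use assms(1) in \<open>auto simp: fssd_fold_def\<close>)
qed

lemma packing_chromatic_number_fssd_le:
  assumes G: "simple_graph V E" and "V \<noteq> {}"
    and K: "packing_chromatic_number V E < a * min_degree V E"
  shows "packing_chromatic_number (fssd_V b V E) (fssd_E b V E)
       \<le> packing_chromatic_number (fssd_V a V E) (fssd_E a V E)"
proof -
  let ?X = "packing_chromatic_number (fssd_V a V E) (fssd_E a V E)"
  have "finite V" using G unfolding simple_graph_def by blast
  have X: "?X \<le> a * min_degree V E"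
    using packing_chromatic_number_fssd_le_Suc[OF G, of a] K by linarith
  obtain c where c: "packing_colouring V E (card V) c"
    using packing_colouring_injective[OF \<open>finite V\<close>] by blast
  obtain f where f: "packing_colouring (fssd_V a V E) (fssd_E a V E) ?X f"
    using packing_chromatic_number_attained[OF fssd_packing_colouring_lift[OF G c]] by blast
  have f_Orig: "f (Orig v) \<in> {2..?X}" if "v \<in> V" for v
    using packing_colouring_in_range[OF f, of "Orig v"] fssd_colour_Orig_ne_1[OF \<open>finite V\<close> f X that] that
    by fastforce
  have "0 < a" using K by (cases a) auto
  have "packing_colouring (fssd_V b V E) (fssd_E b V E) ?X (fssd_colouring (\<lambda>v. f (Orig v)))"
  proof (rule packing_colouring_fssd_colouring)
    show "1 \<le> ?X" using f_Orig \<open>V \<noteq> {}\<close> by fastforce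
  next
    fix xs u v assume xs: "is_walk (fssd_V b V E) (fssd_E b V E) xs"
      and "hd xs = Orig u" "last xs = Orig v" "u \<noteq> v" "f (Orig u) = f (Orig v)"
    then show "f (Orig u) < length xs - 1"
      using packing_colouring_walk[OF f is_walk_fssd_fold[OF \<open>0 < a\<close> xs]] is_walk_nonempty[OF xs]
      by (simp add: hd_map last_map)
  qed (rule f_Orig)
  then show ?thesis by (rule packing_chromatic_number_le)
qed

theorem proposition5:
  fixes V :: "'a set" and E :: "'a set set" and m :: nat
  assumes "simple_graph V E"
    and "V \<noteq> {}"
    and "min_degree V E \<ge> 1"
    and "m \<ge> 1"
    and "real m > real (packing_chromatic_number V E) / real (min_degree V E)"
  shows "packing_chromatic_number (fssd_V m V E) (fssd_E m V E)
       = packing_chromatic_number (fssd_V (m + 1) V E) (fssd_E (m + 1) V E)"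
proof -
  have "real (packing_chromatic_number V E) < real (m * min_degree V E)"
    using assms(3,5) by (simp add: pos_divide_less_eq)
  then have K_m: "packing_chromatic_number V E < m * min_degree V E"
    by (simp only: of_nat_less_iff)
  then have K_Suc_m: "packing_chromatic_number V E < (m + 1) * min_degree V E"
    by (meson add_le_mono1 le_add1 less_le_trans mult_le_mono1)
  show ?thesis
    using packing_chromatic_number_fssd_le[OF assms(1,2) K_Suc_m, of m]
      packing_chromatic_number_fssd_le[OF assms(1,2) K_m, of "m + 1"] by (rule antisym)
qed

end
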